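(* For every integer $n\ge1$ there exist a constant $C_n>0$ and measures $\mu_{nk}$, $1\le k\le n$, on $\Delta_n$ depending on parameters $w_1,\dots,w_n\in\mathbb{C}$ such that $\int_{t\in\Delta_n}|d\mu_{nk}|\le C_n$ and the following identity holds: $$\langle (w-w_1)\cdots(w-w_n)\rangle=\sum_{k=1}^n\int_{t\in\Delta_n}\langle w-t_1w_1-\dots-t_nw_n\rangle^k\,d\mu_{nk}(w_1,\dots,w_n,t).$$
   Context: For $w\in\mathbb{C}\setminus\{0\}$, $\langle w\rangle:=\overline w/w$ denotes the phase function. $\Delta_n=\{t=(t_1,\dots,t_n): t_j\ge0,\ \sum_j t_j=1\}$ is the standard $(n-1)$-simplex. $|d\mu|$ denotes the total variation of a (signed/complex) measure. *)

theory Defs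
  imports "HOL-Analysis.Analysis"
begin

text \<open>Phase function of a complex number: conj(w)/w. (In HOL, division by 0 gives 0,
  so phase 0 = 0; this value is only relevant on the exceptional set.)\<close>
definition phase :: "complex \<Rightarrow> complex" where
  "phase w = cnj w / w"

definition std_simplex :: "(real ^ 'n) set" where
  "std_simplex = {t. (\<forall>i. 0 \<le> t $ i) \<and> (\<Sum>i\<in>UNIV. t $ i) = 1}"

text \<open>A complex measure on a Borel set S of R^n, represented as h d\<nu> with \<nu> a finite
  positive Borel measure concentrated on S and h an \<nu>-integrable complex density.
  Every complex Borel measure has this form (e.g. polar decomposition).\<close>
type_synonym 'n cmeasure = "(real ^ 'n) measure \<times> (real ^ 'n \<Rightarrow> complex)"

definition is_cmeasure_on :: "(real ^ 'n) set \<Rightarrow> 'n cmeasure \<Rightarrow> bool" where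
  "is_cmeasure_on S \<mu> \<longleftrightarrow>
     finite_measure (fst \<mu>) \<and> sets (fst \<mu>) = sets borel \<and>
     integrable (fst \<mu>) (snd \<mu>) \<and> emeasure (fst \<mu>) (UNIV - S) = 0"

definition cm_total_var :: "'n cmeasure \<Rightarrow> real" where
  "cm_total_var \<mu> = (\<integral>t. cmod (snd \<mu> t) \<partial>(fst \<mu>))"

definition cm_integral :: "'n cmeasure \<Rightarrow> (real ^ 'n \<Rightarrow> complex) \<Rightarrow> complex" where
  "cm_integral \<mu> g = (\<integral>t. g t * snd \<mu> t \<partial>(fst \<mu>))"

end

theory Submission
  imports Defs
begin

text \<open>Induction on the number of factors. On the segment \<open>x s = z - ((1 - s) W + s P)\<close> one has
  \<open>phase (x s) - \<rho> = c / x s\<close> with \<open>\<rho> = phase (W - P)\<close> and \<open>c\<close> independent of \<open>s\<close>, so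
  \<open>a s^(a-1) (phase (x s) - \<rho>)^(a+1)\<close> is an exact derivative with integral
  \<open>(phase (z - P) - \<rho>)^a (phase (z - W) - \<rho>)\<close> over \<open>[0, 1]\<close>. Expanding binomially around \<open>\<rho>\<close>,
  \<open>phase (z - P)^k phase (z - W)\<close> becomes an integral along the segment of a polynomial in
  \<open>phase (x s)\<close> with uniformly bounded coefficients. Taking \<open>W = w\<^sub>i\<close> and \<open>P = \<Sum> t\<^sub>j w\<^sub>j\<close> for \<open>t\<close> in
  the simplex, the segment stays in the simplex (it ends at a vertex), so integrating against a
  representation of the product over the other factors yields one for the enlarged product; the
  resulting measure on (simplex) \<open>\<times>\<close> \<open>[0, 3]\<close> is pushed forward to the simplex via Radon-Nikodym
  derivatives.\<close>

lemma borel_measurable_phase [measurable (raw)]: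
  assumes "g \<in> borel_measurable M"
  shows "(\<lambda>x. phase (g x)) \<in> borel_measurable M"
proof -
  have "phase \<in> borel_measurable borel"
    unfolding phase_def[abs_def]
    by (intro borel_measurable_divide borel_measurable_continuous_onI continuous_intros)
  from measurable_compose[OF assms this] show ?thesis .
qed

lemma norm_phase_le: "cmod (phase x) \<le> 1"
  by (cases "x = 0") (auto simp: phase_def norm_divide)

lemma norm_phase_power_le: "cmod (phase x ^ m) \<le> 1"
  by (simp add: norm_power power_le_one norm_phase_le)

lemma phase_mult: "phase (a * b) = phase a * phase b"
  by (simp add: phase_def)

lemma phase_1 [simp]: "phase 1 = 1"
  by (simp add: phase_def)

lemma phase_prod: "phase (\<Prod>j\<in>A. f j) = (\<Prod>j\<in>A. phase (f j))"
  by (induction A rule: infinite_finite_induct) (simp_all add: phase_mult)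

text \<open>Along the line \<open>x s = z - ((1 - s) W + s P)\<close> the quantity \<open>cnj x - phase (W - P) x\<close>
  is constant, so \<open>phase (x s) - phase (W - P)\<close> is a constant divided by \<open>x s\<close>.\<close>

lemma phase_segment_diff:
  fixes z W P :: complex and s :: real
  defines "x \<equiv> z - ((1 - of_real s) * W + of_real s * P)"
  assumes "x \<noteq> 0"
  shows "phase x - phase (W - P) = (cnj (z - W) - phase (W - P) * (z - W)) / x"
proof -
  have "cnj (W - P) - phase (W - P) * (W - P) = 0"
    by (cases "W - P = 0") (auto simp: phase_def)
  moreover have "cnj x - phase (W - P) * x = (cnj (z - W) - phase (W - P) * (z - W))
      + of_real s * (cnj (W - P) - phase (W - P) * (W - P))"
    unfolding x_def by (simp add: algebra_simps)
  ultimately show ?thesis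
    using assms(2) by (simp add: phase_def field_simps)
qed

lemma has_integral_phase_segment_power_nonvanishing:
  fixes z W P :: complex and a :: nat
  assumes a: "1 \<le> a" and zW: "z \<noteq> W"
  defines "x \<equiv> \<lambda>s::real. z - ((1 - of_real s) * W + of_real s * P)"
  defines "\<rho> \<equiv> phase (W - P)"
  assumes x: "\<And>s. s \<in> {0..1} \<Longrightarrow> x s \<noteq> 0"
  shows "((\<lambda>s. of_nat a * of_real s ^ (a - 1) * (phase (x s) - \<rho>) ^ (a + 1)) has_integral
          (phase (x 1) - \<rho>) ^ a * (phase (x 0) - \<rho>)) {0..1}"
proof -
  obtain b where ab: "a = Suc b" using a by (cases a) auto
  define c where "c = cnj (z - W) - \<rho> * (z - W)"
  have diff: "phase (x s) - \<rho> = c / x s" if "s \<in> {0..1}" for s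
    using phase_segment_diff[of z s W P] x[OF that] unfolding x_def c_def \<rho>_def by auto
  define X where "X = (\<lambda>u::complex. z - ((1 - u) * W + u * P))"
  have Xx: "X (of_real s) = x s" for s by (simp add: X_def x_def)
  text \<open>An antiderivative of \<open>a s^(a-1) (c / x s)^(a+1)\<close>, using \<open>(s / x s)' = (z - W) / (x s)^2\<close>.\<close>
  define G where "G = (\<lambda>u::complex. c ^ (a + 1) * (u / X u) ^ a / (z - W))"
  have G': "((\<lambda>s. G (of_real s)) has_vector_derivative
            (of_nat a * of_real s ^ (a - 1) * (c / x s) ^ (a + 1))) (at s within {0..1})"
    if s: "s \<in> {0..1}" for s
  proof -
    have xs: "x s \<noteq> 0" using x s by auto
    have "((\<lambda>u. u / X u) has_field_derivative (z - W) / (X (of_real s))\<^sup>2) (at (of_real s))"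
      using xs unfolding Xx[symmetric]
      by (auto intro!: derivative_eq_intros simp: X_def field_simps power2_eq_square)
    then have "(G has_field_derivative c ^ (a + 1) * (of_nat a * ((z - W) / (X (of_real s))\<^sup>2
        * (of_real s / X (of_real s)) ^ (a - Suc 0))) / (z - W)) (at (of_real s))"
      unfolding G_def by (intro DERIV_cdivide DERIV_cmult DERIV_power)
    moreover have "c ^ (a + 1) * (of_nat a * ((z - W) / (X (of_real s))\<^sup>2
        * (of_real s / X (of_real s)) ^ (a - Suc 0))) / (z - W)
        = of_nat a * of_real s ^ (a - 1) * (c / x s) ^ (a + 1)"
      using xs zW unfolding Xx ab by (simp add: power_divide field_simps power2_eq_square)
    ultimately show ?thesis by (intro has_vector_derivative_real_field) simp
  qed
  have FTC: "((\<lambda>s. of_nat a * of_real s ^ (a - 1) * (c / x s) ^ (a + 1)) has_integral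
          G 1 - G 0) {0..1}"
    using fundamental_theorem_of_calculus[of 0 1, OF _ G'] by simp
  have "G 1 - G 0 = (c / x 1) ^ a * (c / x 0)"
    using zW unfolding G_def ab by (simp add: X_def x_def power_divide field_simps)
  also have "\<dots> = (phase (x 1) - \<rho>) ^ a * (phase (x 0) - \<rho>)"
    using diff[of 0] diff[of 1] by simp
  finally have G10: "G 1 - G 0 = (phase (x 1) - \<rho>) ^ a * (phase (x 0) - \<rho>)" .
  show ?thesis
    using FTC unfolding G10 by (rule has_integral_spike_finite[OF finite.emptyI, rotated]) (simp add: diff)
qed

text \<open>If the line through \<open>W\<close> and \<open>P\<close> contains \<open>z\<close>, the constant \<open>c\<close> above vanishes.\<close>

lemma phase_segment_through_point:
  fixes z W P :: complex and s s0 :: real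
  defines "x \<equiv> \<lambda>s::real. z - ((1 - of_real s) * W + of_real s * P)"
  assumes zW: "z \<noteq> W" and s0: "x s0 = 0" and s: "s \<noteq> s0"
  shows "phase (x s) = phase (W - P)"
proof -
  define \<rho> where "\<rho> = phase (W - P)"
  have WP: "W \<noteq> P" using s0 zW by (auto simp: x_def algebra_simps)
  have "cnj (W - P) - \<rho> * (W - P) = 0" using WP by (simp add: \<rho>_def phase_def)
  moreover have "cnj (x s0) - \<rho> * x s0
      = (cnj (z - W) - \<rho> * (z - W)) + of_real s0 * (cnj (W - P) - \<rho> * (W - P))"
    unfolding x_def by (simp add: algebra_simps)
  ultimately have c0: "cnj (z - W) - \<rho> * (z - W) = 0"
    using s0 by simp
  have "x s - x s0 = of_real (s - s0) * (W - P)" by (simp add: x_def algebra_simps)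
  then have "x s \<noteq> 0" using s WP s0 by simp
  then show ?thesis using phase_segment_diff[of z s W P] c0 unfolding x_def \<rho>_def by simp
qed

lemma has_integral_phase_segment_power:
  fixes z W P :: complex and a :: nat
  assumes a: "1 \<le> a" and zW: "z \<noteq> W"
  defines "x \<equiv> \<lambda>s::real. z - ((1 - of_real s) * W + of_real s * P)"
  defines "\<rho> \<equiv> phase (W - P)"
  shows "((\<lambda>s. of_nat a * of_real s ^ (a - 1) * (phase (x s) - \<rho>) ^ (a + 1)) has_integral
          (phase (x 1) - \<rho>) ^ a * (phase (x 0) - \<rho>)) {0..1}"
proof (cases "\<forall>s\<in>{0..1}. x s \<noteq> 0")
  case True
  then show ?thesis
    using has_integral_phase_segment_power_nonvanishing[OF a zW] unfolding x_def \<rho>_def by blast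
next
  case False
  then obtain s0 where s0: "x s0 = 0" by auto
  have through: "phase (x s) - \<rho> = 0" if "s \<noteq> s0" for s
    using phase_segment_through_point[OF zW s0[unfolded x_def] that] unfolding x_def \<rho>_def by simp
  moreover have "s0 \<noteq> 0" using zW s0 by (auto simp: x_def)
  ultimately show ?thesis using a
    by - (rule has_integral_spike_finite[where S = "{s0}" and f = "\<lambda>_. 0"], auto)
qed

lemma has_integral_power_unit_interval:
  assumes "1 \<le> a"
  shows "((\<lambda>s::real. of_nat a * (of_real s :: complex) ^ (a - 1)) has_integral 1) {0..1}"
proof -
  have "((\<lambda>s::real. (of_real s :: complex) ^ a) has_vector_derivative of_nat a * of_real s ^ (a - 1))
      (at s within {0..1})" for s
    by (rule has_vector_derivative_real_field) (auto intro!: derivative_eq_intros)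
  from fundamental_theorem_of_calculus[OF _ this] assms show ?thesis by (simp add: zero_power)
qed

lemma power_diff_minus_binomial:
  fixes y \<rho> :: complex
  assumes "j \<le> R"
  shows "(y - \<rho>) ^ j - (-\<rho>) ^ j = (\<Sum>m=1..R. of_nat (j choose m) * (-\<rho>) ^ (j - m) * y ^ m)"
proof -
  have "(y - \<rho>) ^ j = (\<Sum>m\<le>j. of_nat (j choose m) * y ^ m * (-\<rho>) ^ (j - m))"
    using binomial_ring[of y "-\<rho>" j] by simp
  also have "\<dots> = (-\<rho>) ^ j + (\<Sum>m=1..j. of_nat (j choose m) * y ^ m * (-\<rho>) ^ (j - m))"
    by (simp add: atMost_atLeast0 sum.atLeast_Suc_atMost)
  also have "(\<Sum>m=1..j. of_nat (j choose m) * y ^ m * (-\<rho>) ^ (j - m))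
      = (\<Sum>m=1..R. of_nat (j choose m) * (-\<rho>) ^ (j - m) * y ^ m)"
    by (rule sum.mono_neutral_cong_left) (use assms in \<open>auto simp: mult_ac\<close>)
  finally show ?thesis by simp
qed

text \<open>Coefficients of the two-point formula \<open>has_integral_two_point\<close>: expand \<open>phase (z - P)^k\<close>
  binomially around \<open>\<rho> = phase (W - P)\<close>, replace each \<open>(phase (z - P) - \<rho>)^a (phase (z - W) - \<rho>)\<close>
  by the segment integral above, and expand the powers of \<open>y - \<rho>\<close> in powers of \<open>y\<close>.\<close>

definition start_coeff :: "nat \<Rightarrow> nat \<Rightarrow> complex \<Rightarrow> complex" where
  "start_coeff k m \<rho> = (if m = 1 then \<rho> ^ k else 0)"

definition end_coeff :: "nat \<Rightarrow> nat \<Rightarrow> complex \<Rightarrow> complex" where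
  "end_coeff k m \<rho> =
     (\<Sum>a=1..k. of_nat (k choose a) * \<rho> ^ (k + 1 - a) * (of_nat (a choose m) * (-\<rho>) ^ (a - m)))"

definition segment_coeff :: "nat \<Rightarrow> nat \<Rightarrow> complex \<Rightarrow> real \<Rightarrow> complex" where
  "segment_coeff k m \<rho> s = (\<Sum>a=1..k. of_nat (k choose a) * \<rho> ^ (k - a) * (of_nat a * of_real s ^ (a - 1))
      * (of_nat ((a + 1) choose m) * (-\<rho>) ^ (a + 1 - m)))"

lemma sum_start_coeff:
  assumes "1 \<le> R"
  shows "(\<Sum>m=1..R. start_coeff k m \<rho> * y ^ m) = \<rho> ^ k * y"
proof -
  have "(\<Sum>m=1..R. start_coeff k m \<rho> * y ^ m) = (\<Sum>m\<in>{1..R}. if m = 1 then \<rho> ^ k * y else 0)"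
    by (rule sum.cong) (simp_all add: start_coeff_def)
  also have "\<dots> = \<rho> ^ k * y" using assms by (subst sum.delta) auto
  finally show ?thesis .
qed

lemma sum_end_coeff:
  assumes "k \<le> R"
  shows "(\<Sum>m=1..R. end_coeff k m \<rho> * y ^ m) =
    (\<Sum>a=1..k. of_nat (k choose a) * \<rho> ^ (k + 1 - a) * ((y - \<rho>) ^ a - (-\<rho>) ^ a))"
proof -
  have "(\<Sum>m=1..R. end_coeff k m \<rho> * y ^ m) = (\<Sum>a=1..k. of_nat (k choose a) * \<rho> ^ (k + 1 - a) *
      (\<Sum>m=1..R. of_nat (a choose m) * (-\<rho>) ^ (a - m) * y ^ m))"
    unfolding end_coeff_def sum_distrib_right sum_distrib_left
    by (subst sum.swap) (auto intro!: sum.cong simp: mult_ac)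
  also have "\<dots> = (\<Sum>a=1..k. of_nat (k choose a) * \<rho> ^ (k + 1 - a) * ((y - \<rho>) ^ a - (-\<rho>) ^ a))"
    using assms by (intro sum.cong refl) (subst power_diff_minus_binomial[where R = R], auto)
  finally show ?thesis .
qed

lemma sum_segment_coeff:
  assumes "k + 1 \<le> R"
  shows "(\<Sum>m=1..R. segment_coeff k m \<rho> s * y ^ m) =
    (\<Sum>a=1..k. of_nat (k choose a) * \<rho> ^ (k - a) * (of_nat a * of_real s ^ (a - 1)) *
       ((y - \<rho>) ^ (a + 1) - (-\<rho>) ^ (a + 1)))"
proof -
  have "(\<Sum>m=1..R. segment_coeff k m \<rho> s * y ^ m) =
      (\<Sum>a=1..k. of_nat (k choose a) * \<rho> ^ (k - a) * (of_nat a * of_real s ^ (a - 1)) *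
         (\<Sum>m=1..R. of_nat ((a + 1) choose m) * (-\<rho>) ^ (a + 1 - m) * y ^ m))"
    unfolding segment_coeff_def sum_distrib_right sum_distrib_left
    by (subst sum.swap) (auto intro!: sum.cong simp: mult_ac)
  also have "\<dots> = (\<Sum>a=1..k. of_nat (k choose a) * \<rho> ^ (k - a) * (of_nat a * of_real s ^ (a - 1)) *
       ((y - \<rho>) ^ (a + 1) - (-\<rho>) ^ (a + 1)))"
    using assms by (intro sum.cong refl) (subst power_diff_minus_binomial[where R = R], auto)
  finally show ?thesis .
qed

lemma two_point_binomial_identity:
  fixes Q0 Q1 \<rho> :: complex
  assumes "k + 1 \<le> R"
  shows "Q1 ^ k * Q0 = (\<Sum>a=1..k. of_nat (k choose a) * \<rho> ^ (k - a) *
            ((Q1 - \<rho>) ^ a * (Q0 - \<rho>) - (-\<rho>) ^ (a + 1)))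
          + (\<Sum>m=1..R. start_coeff k m \<rho> * Q0 ^ m + end_coeff k m \<rho> * Q1 ^ m)"
proof -
  have "Q1 ^ k = (\<Sum>a\<le>k. of_nat (k choose a) * (Q1 - \<rho>) ^ a * \<rho> ^ (k - a))"
    using binomial_ring[of "Q1 - \<rho>" \<rho> k] by simp
  then have bin: "Q1 ^ k = \<rho> ^ k + (\<Sum>a=1..k. of_nat (k choose a) * (Q1 - \<rho>) ^ a * \<rho> ^ (k - a))"
    by (simp add: atMost_atLeast0 sum.atLeast_Suc_atMost)
  have pw: "\<rho> ^ (Suc k - a) = \<rho> * \<rho> ^ (k - a)" if "a \<in> {1..k}" for a
    using that by (simp add: Suc_diff_le flip: power_Suc)
  have "(\<Sum>m=1..R. start_coeff k m \<rho> * Q0 ^ m + end_coeff k m \<rho> * Q1 ^ m) = \<rho> ^ k * Q0 +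
      (\<Sum>a=1..k. of_nat (k choose a) * \<rho> ^ (k + 1 - a) * ((Q1 - \<rho>) ^ a - (-\<rho>) ^ a))"
    using assms unfolding sum.distrib
    by (subst sum_start_coeff, simp, subst sum_end_coeff, simp_all)
  also have "\<dots> = \<rho> ^ k * Q0 +
      (\<Sum>a=1..k. of_nat (k choose a) * \<rho> ^ (k - a) * (\<rho> * (Q1 - \<rho>) ^ a - \<rho> * (-\<rho>) ^ a))"
    by (intro arg_cong2[where f = "(+)"] refl sum.cong) (simp add: pw algebra_simps)
  moreover have "Q1 ^ k * Q0 = \<rho> ^ k * Q0 +
      (\<Sum>a=1..k. of_nat (k choose a) * \<rho> ^ (k - a) * (\<rho> * (Q1 - \<rho>) ^ a - \<rho> * (-\<rho>) ^ a))
      + (\<Sum>a=1..k. of_nat (k choose a) * \<rho> ^ (k - a) * ((Q1 - \<rho>) ^ a * (Q0 - \<rho>) - (-\<rho>) ^ (a + 1)))"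
    unfolding bin by (simp add: sum.distrib[symmetric] sum_distrib_left sum_distrib_right algebra_simps)
  ultimately show ?thesis by simp
qed

lemma has_integral_two_point:
  fixes z W P :: complex
  assumes k: "1 \<le> k" and R: "k + 1 \<le> R" and zW: "z \<noteq> W"
  defines "x \<equiv> \<lambda>s::real. z - ((1 - of_real s) * W + of_real s * P)"
  defines "\<rho> \<equiv> phase (W - P)"
  shows "((\<lambda>s. \<Sum>m=1..R. segment_coeff k m \<rho> s * phase (x s) ^ m) has_integral
     phase (z - P) ^ k * phase (z - W)
       - (\<Sum>m=1..R. start_coeff k m \<rho> * phase (z - W) ^ m + end_coeff k m \<rho> * phase (z - P) ^ m)) {0..1}"
proof -
  have integrand: "(\<Sum>m=1..R. segment_coeff k m \<rho> s * y ^ m) =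
      (\<Sum>a=1..k. of_nat (k choose a) * \<rho> ^ (k - a) * (of_nat a * of_real s ^ (a - 1) * (y - \<rho>) ^ (a + 1)
        - of_nat a * of_real s ^ (a - 1) * (-\<rho>) ^ (a + 1)))" for s y
    unfolding sum_segment_coeff[OF R] by (intro sum.cong refl) (simp add: algebra_simps)
  have "phase (z - P) ^ k * phase (z - W)
       - (\<Sum>m=1..R. start_coeff k m \<rho> * phase (z - W) ^ m + end_coeff k m \<rho> * phase (z - P) ^ m)
      = (\<Sum>a=1..k. of_nat (k choose a) * \<rho> ^ (k - a) *
        ((phase (z - P) - \<rho>) ^ a * (phase (z - W) - \<rho>) - 1 * (-\<rho>) ^ (a + 1)))"
    using two_point_binomial_identity[OF R, of "phase (z - P)" "phase (z - W)" \<rho>] by simp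
  moreover have "((\<lambda>s. \<Sum>a=1..k. of_nat (k choose a) * \<rho> ^ (k - a) *
      (of_nat a * of_real s ^ (a - 1) * (phase (x s) - \<rho>) ^ (a + 1)
        - of_nat a * of_real s ^ (a - 1) * (-\<rho>) ^ (a + 1))) has_integral
      (\<Sum>a=1..k. of_nat (k choose a) * \<rho> ^ (k - a) *
        ((phase (z - P) - \<rho>) ^ a * (phase (z - W) - \<rho>) - 1 * (-\<rho>) ^ (a + 1)))) {0..1}"
  proof (intro has_integral_sum finite_atLeastAtMost has_integral_mult_right has_integral_diff
      has_integral_mult_left)
    fix a assume a: "a \<in> {1..k}"
    show "((\<lambda>s. of_nat a * of_real s ^ (a - 1) * (phase (x s) - \<rho>) ^ (a + 1)) has_integral
        (phase (z - P) - \<rho>) ^ a * (phase (z - W) - \<rho>)) {0..1}"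
      using has_integral_phase_segment_power[of a z W P] a zW unfolding x_def \<rho>_def by simp
    show "((\<lambda>s. of_nat a * complex_of_real s ^ (a - 1)) has_integral 1) {0..1}"
      using a by (intro has_integral_power_unit_interval) auto
  qed
  ultimately show ?thesis
    unfolding integrand by simp
qed

text \<open>On \<open>[0, 3]\<close> the point \<open>(1 - segment_param s) W + segment_param s P\<close> runs along the segment
  for \<open>s \<in> [0, 1]\<close> and rests at \<open>W\<close>, resp. \<open>P\<close>, on \<open>(1, 2]\<close>, resp. \<open>(2, 3]\<close>; this turns the
  endpoint terms of the two-point formula into integrals as well.\<close>

definition segment_param :: "real \<Rightarrow> real" where
  "segment_param s = (if s \<le> 1 then s else if s \<le> 2 then 0 else 1)"

definition two_point_density :: "nat \<Rightarrow> nat \<Rightarrow> complex \<Rightarrow> real \<Rightarrow> complex" where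
  "two_point_density k m \<rho> s =
     (if s \<le> 1 then segment_coeff k m \<rho> s else if s \<le> 2 then start_coeff k m \<rho> else end_coeff k m \<rho>)"

definition two_point_density_bound :: "nat \<Rightarrow> nat \<Rightarrow> real" where
  "two_point_density_bound k m = 1 + (\<Sum>a=1..k. real (k choose a) * real (a choose m))
     + (\<Sum>a=1..k. real (k choose a) * real a * real ((a + 1) choose m))"

lemma segment_param_range: "0 \<le> s \<Longrightarrow> segment_param s \<in> {0..1}"
  by (auto simp: segment_param_def)

lemma borel_measurable_segment_param [measurable (raw)]:
  assumes [measurable]: "g \<in> borel_measurable M"
  shows "(\<lambda>x. segment_param (g x)) \<in> borel_measurable M"
  unfolding segment_param_def by measurable

lemma borel_measurable_two_point_density [measurable (raw)]:
  assumes [measurable]: "f \<in> borel_measurable M" "g \<in> borel_measurable M"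
  shows "(\<lambda>x. two_point_density k m (f x) (g x)) \<in> borel_measurable M"
  unfolding two_point_density_def segment_coeff_def start_coeff_def end_coeff_def by measurable

lemma two_point_density_bound_nonneg: "0 \<le> two_point_density_bound k m"
  unfolding two_point_density_bound_def by (intro add_nonneg_nonneg sum_nonneg) auto

lemma norm_two_point_density_le:
  assumes "cmod \<rho> \<le> 1" "s \<in> {0..3}"
  shows "cmod (two_point_density k m \<rho> s) \<le> two_point_density_bound k m"
proof -
  have \<rho>: "cmod \<rho> ^ n \<le> 1" for n using assms(1) by (simp add: power_le_one)
  have start: "cmod (start_coeff k m \<rho>) \<le> 1"
    using \<rho> by (auto simp: start_coeff_def norm_power)
  have "cmod (end_coeff k m \<rho>) \<le> (\<Sum>a=1..k. real (k choose a) * real (a choose m))"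
    unfolding end_coeff_def
  proof (rule order_trans[OF norm_sum], rule sum_mono)
    fix a
    have "cmod (of_nat (k choose a) * \<rho> ^ (k + 1 - a) * (of_nat (a choose m) * (- \<rho>) ^ (a - m)))
        = real (k choose a) * cmod \<rho> ^ (k + 1 - a) * (real (a choose m) * cmod \<rho> ^ (a - m))"
      by (simp add: norm_mult norm_power)
    also have "\<dots> \<le> real (k choose a) * 1 * (real (a choose m) * 1)"
      using \<rho> by (intro mult_mono) auto
    finally show "cmod (of_nat (k choose a) * \<rho> ^ (k + 1 - a) * (of_nat (a choose m) * (- \<rho>) ^ (a - m)))
        \<le> real (k choose a) * real (a choose m)" by simp
  qed
  moreover have "cmod (segment_coeff k m \<rho> s) \<le>
      (\<Sum>a=1..k. real (k choose a) * real a * real ((a + 1) choose m))" if "s \<le> 1"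
    unfolding segment_coeff_def
  proof (rule order_trans[OF norm_sum], rule sum_mono)
    fix a
    have s: "\<bar>s\<bar> ^ n \<le> 1" for n using that assms(2) by (intro power_le_one) auto
    have "cmod (of_nat (k choose a) * \<rho> ^ (k - a) * (of_nat a * complex_of_real s ^ (a - 1)) *
         (of_nat ((a + 1) choose m) * (- \<rho>) ^ (a + 1 - m)))
        = real (k choose a) * cmod \<rho> ^ (k - a) * (real a * \<bar>s\<bar> ^ (a - 1))
          * (real ((a + 1) choose m) * cmod \<rho> ^ (a + 1 - m))"
      by (simp add: norm_mult norm_power)
    also have "\<dots> \<le> real (k choose a) * 1 * (real a * 1) * (real ((a + 1) choose m) * 1)"
      using \<rho> s by (intro mult_mono) auto
    finally show "cmod (of_nat (k choose a) * \<rho> ^ (k - a) * (of_nat a * complex_of_real s ^ (a - 1)) *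
         (of_nat ((a + 1) choose m) * (- \<rho>) ^ (a + 1 - m)))
        \<le> real (k choose a) * real a * real ((a + 1) choose m)" by simp
  qed
  moreover have "0 \<le> (\<Sum>a=1..k. real (k choose a) * real (a choose m))"
    "0 \<le> (\<Sum>a=1..k. real (k choose a) * real a * real ((a + 1) choose m))"
    by (intro sum_nonneg; simp)+
  ultimately show ?thesis
    using start unfolding two_point_density_def two_point_density_bound_def by auto
qed

lemma norm_two_point_sum_le:
  assumes "cmod \<rho> \<le> 1" "s \<in> {0..3}"
  shows "cmod (\<Sum>m=1..R. phase (y m) ^ m * two_point_density k m \<rho> s) \<le> (\<Sum>m=1..R. two_point_density_bound k m)"
proof (intro order_trans[OF norm_sum] sum_mono)
  fix m
  have "cmod (phase (y m) ^ m) * cmod (two_point_density k m \<rho> s) \<le> cmod (two_point_density k m \<rho> s)"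
    by (intro mult_left_le_one_le norm_ge_zero norm_phase_power_le)
  also have "\<dots> \<le> two_point_density_bound k m"
    by (rule norm_two_point_density_le[OF assms])
  finally show "cmod (phase (y m) ^ m * two_point_density k m \<rho> s) \<le> two_point_density_bound k m"
    by (simp add: norm_mult)
qed

lemma two_point_integral:
  fixes z W P :: complex
  assumes k: "1 \<le> k" and R: "k + 1 \<le> R" and zW: "z \<noteq> W"
  defines "\<rho> \<equiv> phase (W - P)"
  defines "F \<equiv> \<lambda>s. \<Sum>m=1..R. phase (z - ((1 - of_real (segment_param s)) * W + of_real (segment_param s) * P)) ^ m
                    * two_point_density k m \<rho> s"
  shows "integrable (lebesgue_on {0..3}) F"
    and "integral\<^sup>L (lebesgue_on {0..3}) F = phase (z - P) ^ k * phase (z - W)"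
proof -
  interpret finite_measure "lebesgue_on {0..3::real}"
    by (rule finite_measure_lebesgue_on) auto
  have "F \<in> borel_measurable borel"
    unfolding F_def by measurable
  then have "F \<in> borel_measurable (lebesgue_on {0..3})"
    using measurable_compose[OF id_borel_measurable_lebesgue_on] by (simp add: id_def)
  moreover have "cmod (F s) \<le> (\<Sum>m=1..R. two_point_density_bound k m)" if "s \<in> {0..3}" for s
    unfolding F_def \<rho>_def by (rule norm_two_point_sum_le[OF norm_phase_le that])
  ultimately show int: "integrable (lebesgue_on {0..3}) F"
    by (intro integrable_const_bound[where B = "\<Sum>m=1..R. two_point_density_bound k m"] AE_I2) auto
  define A where "A = (\<Sum>m=1..R. start_coeff k m \<rho> * phase (z - W) ^ m)"
  define B where "B = (\<Sum>m=1..R. end_coeff k m \<rho> * phase (z - P) ^ m)"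
  have segment: "(F has_integral phase (z - P) ^ k * phase (z - W) - (A + B)) {0..1}"
    using has_integral_two_point[OF k R zW, of P, folded \<rho>_def] unfolding A_def B_def sum.distrib
    by (rule has_integral_spike_finite[OF finite.emptyI, rotated])
      (auto simp: F_def segment_param_def two_point_density_def mult.commute)
  have "((\<lambda>_. A) has_integral A) {1..2::real}"
    using has_integral_const_real[of A 1 2] by simp
  then have start: "(F has_integral A) {1..2}"
    by (rule has_integral_spike_finite[where S = "{1}", rotated 2])
      (auto simp: F_def A_def segment_param_def two_point_density_def mult.commute intro!: sum.cong)
  have "((\<lambda>_. B) has_integral B) {2..3::real}"
    using has_integral_const_real[of B 2 3] by simp
  then have "end": "(F has_integral B) {2..3}"
    by (rule has_integral_spike_finite[where S = "{2}", rotated 2])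
      (auto simp: F_def B_def segment_param_def two_point_density_def mult.commute intro!: sum.cong)
  have "(F has_integral (phase (z - P) ^ k * phase (z - W) - (A + B)) + (A + B)) {0..3}"
    by (intro has_integral_combine[OF _ _ segment] has_integral_combine[OF _ _ start "end"]) auto
  then have "(F has_integral phase (z - P) ^ k * phase (z - W)) {0..3}"
    by simp
  moreover have "(F has_integral integral\<^sup>L (lebesgue_on {0..3}) F) {0..3}"
    by (rule has_integral_integral_lebesgue_on[OF int]) auto
  ultimately show "integral\<^sup>L (lebesgue_on {0..3}) F = phase (z - P) ^ k * phase (z - W)"
    using has_integral_unique by blast
qed

lemma integrable_bounded_mult:
  fixes f g :: "'a \<Rightarrow> complex"
  assumes "integrable M f" "g \<in> borel_measurable M" "\<And>x. x \<in> space M \<Longrightarrow> cmod (g x) \<le> 1"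
  shows "integrable M (\<lambda>x. g x * f x)"
  using assms
  by (intro Bochner_Integration.integrable_bound[OF assms(1)] AE_I2)
    (auto simp: norm_mult intro: mult_left_le_one_le)

definition pushforward_density :: "'a measure \<Rightarrow> ('a \<Rightarrow> 'c::topological_space) \<Rightarrow> ('a \<Rightarrow> real) \<Rightarrow> 'c \<Rightarrow> real"
  where "pushforward_density M T f t =
    enn2real (RN_deriv (distr M borel T) (distr (density M (\<lambda>x. ennreal (f x))) borel T) t)"

lemma absolutely_continuous_distr_density:
  assumes T: "T \<in> M \<rightarrow>\<^sub>M borel" and f: "f \<in> borel_measurable M"
  shows "absolutely_continuous (distr M borel T) (distr (density M f) borel T)"
  unfolding absolutely_continuous_def
proof
  fix A assume A: "A \<in> null_sets (distr M borel T)"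
  then have As: "A \<in> sets borel"
    using null_setsD2 by fastforce
  then have "T -` A \<inter> space M \<in> null_sets M"
    using A T by (simp add: emeasure_distr null_sets_def)
  then have "T -` A \<inter> space M \<in> null_sets (density M f)"
    using absolutely_continuousI_density[OF f] unfolding absolutely_continuous_def by auto
  then show "A \<in> null_sets (distr (density M f) borel T)"
    using As T by (simp add: null_sets_def emeasure_distr)
qed

lemma finite_measure_density_integrable:
  fixes f :: "'a \<Rightarrow> real"
  assumes fnn: "\<And>x. x \<in> space M \<Longrightarrow> 0 \<le> f x" and fi: "integrable M f"
  shows "finite_measure (density M (\<lambda>x. ennreal (f x)))"
proof -
  have "(\<integral>\<^sup>+x. ennreal (f x) \<partial>M) = (\<integral>\<^sup>+x. ennreal \<bar>f x\<bar> \<partial>M)"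
    by (rule nn_integral_cong) (use fnn in simp)
  then have "(\<integral>\<^sup>+x. ennreal (f x) \<partial>M) < \<infinity>"
    using fi by (simp add: integrable_iff_bounded less_top)
  with fi show ?thesis
    by (intro finite_measureI) (auto simp: emeasure_density)
qed

lemma density_pushforward_density:
  fixes M :: "'a measure" and T :: "'a \<Rightarrow> 'c::second_countable_topology" and f :: "'a \<Rightarrow> real"
  assumes fin: "finite_measure M" and T[measurable]: "T \<in> M \<rightarrow>\<^sub>M borel"
    and fnn: "\<And>x. x \<in> space M \<Longrightarrow> 0 \<le> f x" and fi: "integrable M f"
  shows "density (distr M borel T) (\<lambda>t. ennreal (pushforward_density M T f t))
    = distr (density M (\<lambda>x. ennreal (f x))) borel T"
proof -
  define \<nu> N where "\<nu> = distr M borel T" and "N = distr (density M (\<lambda>x. ennreal (f x))) borel T"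
  have [measurable]: "f \<in> borel_measurable M" using fi by auto
  interpret \<nu>: finite_measure \<nu>
    unfolding \<nu>_def by (rule finite_measure.finite_measure_distr[OF fin]) simp
  interpret N: finite_measure N
    unfolding N_def
    by (rule finite_measure.finite_measure_distr[OF finite_measure_density_integrable[OF fnn fi]]) measurable
  have ac: "absolutely_continuous \<nu> N" and sN: "sets N = sets \<nu>"
    unfolding \<nu>_def N_def by (simp_all add: absolutely_continuous_distr_density)
  have "AE t in \<nu>. RN_deriv \<nu> N t \<noteq> \<infinity>"
    by (rule \<nu>.RN_deriv_finite[OF _ ac sN]) unfold_locales
  then have "density \<nu> (\<lambda>t. ennreal (pushforward_density M T f t)) = density \<nu> (RN_deriv \<nu> N)"
    by (intro density_cong)
      (auto simp: pushforward_density_def \<nu>_def[symmetric] N_def[symmetric] ennreal_enn2real_if)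
  also have "\<dots> = N"
    by (rule \<nu>.density_RN_deriv[OF ac sN])
  finally show ?thesis
    unfolding \<nu>_def N_def .
qed

lemma pushforward_density:
  fixes M :: "'a measure" and T :: "'a \<Rightarrow> 'c::second_countable_topology" and f :: "'a \<Rightarrow> real"
  assumes fin: "finite_measure M" and T[measurable]: "T \<in> M \<rightarrow>\<^sub>M borel"
    and fnn: "\<And>x. x \<in> space M \<Longrightarrow> 0 \<le> f x" and fi: "integrable M f"
  defines "\<nu> \<equiv> distr M borel T" and "d \<equiv> pushforward_density M T f"
  shows "d \<in> borel_measurable borel" "\<And>t. 0 \<le> d t"
    and "\<And>g::'c \<Rightarrow> 'b::{banach,second_countable_topology}. g \<in> borel_measurable borel \<Longrightarrow>
          (\<And>t. norm (g t) \<le> 1) \<Longrightarrow>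
          integrable \<nu> (\<lambda>t. d t *\<^sub>R g t) \<and> (\<integral>t. d t *\<^sub>R g t \<partial>\<nu>) = (\<integral>x. f x *\<^sub>R g (T x) \<partial>M)"
    and "integrable \<nu> d" "(\<integral>t. d t \<partial>\<nu>) = (\<integral>x. f x \<partial>M)"
proof -
  have [measurable]: "f \<in> borel_measurable M" using fi by auto
  define N where "N = distr (density M (\<lambda>x. ennreal (f x))) borel T"
  interpret N: finite_measure N
    unfolding N_def
    by (rule finite_measure.finite_measure_distr[OF finite_measure_density_integrable[OF fnn fi]]) measurable
  have dens: "density \<nu> (\<lambda>t. ennreal (d t)) = N"
    unfolding \<nu>_def d_def N_def by (rule density_pushforward_density[OF fin T fnn fi])
  show dm: "d \<in> borel_measurable borel" and dnn: "\<And>t. 0 \<le> d t"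
    by (simp_all add: d_def pushforward_density_def[abs_def])
  have main: "integrable \<nu> (\<lambda>t. d t *\<^sub>R g t) \<and> (\<integral>t. d t *\<^sub>R g t \<partial>\<nu>) = (\<integral>x. f x *\<^sub>R g (T x) \<partial>M)"
    if g: "g \<in> borel_measurable borel" and gb: "\<And>t. norm (g t) \<le> 1"
    for g :: "'c \<Rightarrow> 'd::{banach,second_countable_topology}"
  proof
    have [measurable]: "d \<in> borel_measurable \<nu>" "g \<in> borel_measurable \<nu>" "g \<in> borel_measurable N"
      using dm g by (simp_all add: \<nu>_def N_def)
    have "integrable N g"
      by (rule N.integrable_const_bound[where B = 1]) (use gb in auto)
    then show "integrable \<nu> (\<lambda>t. d t *\<^sub>R g t)"
      unfolding dens[symmetric] by (subst (asm) integrable_density) (use dnn in auto)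
    have "(\<integral>t. d t *\<^sub>R g t \<partial>\<nu>) = integral\<^sup>L N g"
      unfolding dens[symmetric] by (subst integral_density) (use dnn in auto)
    also have "\<dots> = (\<integral>x. g (T x) \<partial>density M (\<lambda>x. ennreal (f x)))"
      unfolding N_def by (rule integral_distr) (simp_all add: g)
    also have "\<dots> = (\<integral>x. f x *\<^sub>R g (T x) \<partial>M)"
      by (subst integral_density) (use fnn measurable_compose[OF T g] in \<open>auto intro!: AE_I2\<close>)
    finally show "(\<integral>t. d t *\<^sub>R g t \<partial>\<nu>) = (\<integral>x. f x *\<^sub>R g (T x) \<partial>M)" .
  qed
  then show "\<And>g::'c \<Rightarrow> 'b::{banach,second_countable_topology}. g \<in> borel_measurable borel \<Longrightarrow>
      (\<And>t. norm (g t) \<le> 1) \<Longrightarrow>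
      integrable \<nu> (\<lambda>t. d t *\<^sub>R g t) \<and> (\<integral>t. d t *\<^sub>R g t \<partial>\<nu>) = (\<integral>x. f x *\<^sub>R g (T x) \<partial>M)"
    by blast
  from main[of "\<lambda>_. 1::real"] show "integrable \<nu> d" "(\<integral>t. d t \<partial>\<nu>) = (\<integral>x. f x \<partial>M)"
    by auto
qed

definition signed_pushforward_density ::
    "'a measure \<Rightarrow> ('a \<Rightarrow> 'c::topological_space) \<Rightarrow> ('a \<Rightarrow> real) \<Rightarrow> 'c \<Rightarrow> real"
  where "signed_pushforward_density M T f t =
    pushforward_density M T (\<lambda>x. max 0 (f x)) t - pushforward_density M T (\<lambda>x. max 0 (- f x)) t"

lemma signed_pushforward_density:
  fixes M :: "'a measure" and T :: "'a \<Rightarrow> 'c::second_countable_topology" and f :: "'a \<Rightarrow> real"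
  assumes fin: "finite_measure M" and Tm[measurable]: "T \<in> M \<rightarrow>\<^sub>M borel" and fi: "integrable M f"
  defines "\<nu> \<equiv> distr M borel T" and "d \<equiv> signed_pushforward_density M T f"
  shows "d \<in> borel_measurable borel" and "integrable \<nu> d"
    and "(\<integral>t. \<bar>d t\<bar> \<partial>\<nu>) \<le> (\<integral>x. \<bar>f x\<bar> \<partial>M)"
    and "\<And>g::'c \<Rightarrow> complex. g \<in> borel_measurable borel \<Longrightarrow> (\<And>t. cmod (g t) \<le> 1) \<Longrightarrow>
          integrable \<nu> (\<lambda>t. of_real (d t) * g t) \<and>
          (\<integral>t. of_real (d t) * g t \<partial>\<nu>) = (\<integral>x. of_real (f x) * g (T x) \<partial>M)"
proof -
  have [measurable]: "f \<in> borel_measurable M" using fi by auto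
  define f\<^sub>p f\<^sub>n where "f\<^sub>p = (\<lambda>x. max 0 (f x))" and "f\<^sub>n = (\<lambda>x. max 0 (- f x))"
  have int_pn: "integrable M f\<^sub>p" "integrable M f\<^sub>n"
    unfolding f\<^sub>p_def f\<^sub>n_def using fi by auto
  have nn: "0 \<le> f\<^sub>p x" "0 \<le> f\<^sub>n x" for x
    by (simp_all add: f\<^sub>p_def f\<^sub>n_def)
  note P = pushforward_density[OF fin Tm nn(1) int_pn(1), folded \<nu>_def]
  note N = pushforward_density[OF fin Tm nn(2) int_pn(2), folded \<nu>_def]
  have d: "d = (\<lambda>t. pushforward_density M T f\<^sub>p t - pushforward_density M T f\<^sub>n t)"
    by (simp add: d_def signed_pushforward_density_def[abs_def] f\<^sub>p_def f\<^sub>n_def)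
  show "d \<in> borel_measurable borel" "integrable \<nu> d"
    unfolding d using P N by (auto simp: f\<^sub>p_def f\<^sub>n_def)
  have "\<bar>d t\<bar> \<le> pushforward_density M T f\<^sub>p t + pushforward_density M T f\<^sub>n t" for t
    unfolding d using P(2)[of t] N(2)[of t] by (simp add: f\<^sub>p_def f\<^sub>n_def abs_le_iff)
  then have "(\<integral>t. \<bar>d t\<bar> \<partial>\<nu>) \<le> (\<integral>t. pushforward_density M T f\<^sub>p t + pushforward_density M T f\<^sub>n t \<partial>\<nu>)"
    using P(4) N(4) \<open>integrable \<nu> d\<close> by (intro integral_mono) (auto simp: f\<^sub>p_def f\<^sub>n_def)
  also have "\<dots> = (\<integral>x. f\<^sub>p x + f\<^sub>n x \<partial>M)"
    using P N int_pn by (simp add: f\<^sub>p_def f\<^sub>n_def)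
  also have "\<dots> = (\<integral>x. \<bar>f x\<bar> \<partial>M)"
    by (rule Bochner_Integration.integral_cong) (auto simp: f\<^sub>p_def f\<^sub>n_def)
  finally show "(\<integral>t. \<bar>d t\<bar> \<partial>\<nu>) \<le> (\<integral>x. \<bar>f x\<bar> \<partial>M)" .
  fix g :: "'c \<Rightarrow> complex"
  assume g: "g \<in> borel_measurable borel" "\<And>t. cmod (g t) \<le> 1"
  have gT[measurable]: "(\<lambda>x. g (T x)) \<in> borel_measurable M"
    using measurable_compose[OF Tm g(1)] by simp
  have "integrable M (\<lambda>x. g (T x) * of_real (f\<^sub>p x))" "integrable M (\<lambda>x. g (T x) * of_real (f\<^sub>n x))"
    using g(2) int_pn by (auto intro!: integrable_bounded_mult)
  then have int_g: "integrable M (\<lambda>x. f\<^sub>p x *\<^sub>R g (T x))" "integrable M (\<lambda>x. f\<^sub>n x *\<^sub>R g (T x))"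
    by (simp_all add: scaleR_conv_of_real mult.commute)
  have dg: "of_real (d t) * g t = pushforward_density M T f\<^sub>p t *\<^sub>R g t - pushforward_density M T f\<^sub>n t *\<^sub>R g t"
    for t by (simp add: d scaleR_conv_of_real algebra_simps)
  have fg: "of_real (f x) * g (T x) = f\<^sub>p x *\<^sub>R g (T x) - f\<^sub>n x *\<^sub>R g (T x)" for x
    by (simp add: f\<^sub>p_def f\<^sub>n_def scaleR_conv_of_real max_def algebra_simps)
  show "integrable \<nu> (\<lambda>t. of_real (d t) * g t) \<and>
      (\<integral>t. of_real (d t) * g t \<partial>\<nu>) = (\<integral>x. of_real (f x) * g (T x) \<partial>M)"
    unfolding dg fg using P(3)[OF g] N(3)[OF g] int_g by simp
qed

definition complex_pushforward_density ::
    "'a measure \<Rightarrow> ('a \<Rightarrow> 'c::topological_space) \<Rightarrow> ('a \<Rightarrow> complex) \<Rightarrow> 'c \<Rightarrow> complex"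
  where "complex_pushforward_density M T h t =
    of_real (signed_pushforward_density M T (\<lambda>x. Re (h x)) t)
      + \<i> * of_real (signed_pushforward_density M T (\<lambda>x. Im (h x)) t)"

lemma complex_pushforward_density:
  fixes M :: "'a measure" and T :: "'a \<Rightarrow> 'c::second_countable_topology" and h :: "'a \<Rightarrow> complex"
  assumes fin: "finite_measure M" and Tm[measurable]: "T \<in> M \<rightarrow>\<^sub>M borel" and hi: "integrable M h"
  defines "\<nu> \<equiv> distr M borel T" and "d \<equiv> complex_pushforward_density M T h"
  shows "d \<in> borel_measurable borel" and "integrable \<nu> d"
    and "(\<integral>t. cmod (d t) \<partial>\<nu>) \<le> 2 * (\<integral>x. cmod (h x) \<partial>M)"
    and "\<And>g. g \<in> borel_measurable borel \<Longrightarrow> (\<And>t. cmod (g t) \<le> 1) \<Longrightarrow>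
          (\<integral>t. g t * d t \<partial>\<nu>) = (\<integral>x. g (T x) * h x \<partial>M)"
proof -
  define d\<^sub>r d\<^sub>i where "d\<^sub>r = signed_pushforward_density M T (\<lambda>x. Re (h x))"
    and "d\<^sub>i = signed_pushforward_density M T (\<lambda>x. Im (h x))"
  have int_ri: "integrable M (\<lambda>x. Re (h x))" "integrable M (\<lambda>x. Im (h x))"
    using hi by auto
  note R = signed_pushforward_density[OF fin Tm int_ri(1), folded \<nu>_def d\<^sub>r_def]
  note I = signed_pushforward_density[OF fin Tm int_ri(2), folded \<nu>_def d\<^sub>i_def]
  have d: "d = (\<lambda>t. of_real (d\<^sub>r t) + \<i> * of_real (d\<^sub>i t))"
    by (simp add: d_def complex_pushforward_density_def[abs_def] d\<^sub>r_def d\<^sub>i_def)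
  show "d \<in> borel_measurable borel" "integrable \<nu> d"
    unfolding d using R I by auto
  have "(\<integral>t. cmod (d t) \<partial>\<nu>) \<le> (\<integral>t. \<bar>d\<^sub>r t\<bar> + \<bar>d\<^sub>i t\<bar> \<partial>\<nu>)"
    using R I unfolding d
    by (intro integral_mono) (auto intro: order_trans[OF norm_triangle_ineq] simp: norm_mult)
  also have "\<dots> \<le> (\<integral>x. \<bar>Re (h x)\<bar> \<partial>M) + (\<integral>x. \<bar>Im (h x)\<bar> \<partial>M)"
    using R I by (simp add: add_mono)
  also have "\<dots> \<le> (\<integral>x. cmod (h x) \<partial>M) + (\<integral>x. cmod (h x) \<partial>M)"
    using hi int_ri by (intro add_mono integral_mono) (auto simp: abs_Re_le_cmod abs_Im_le_cmod)
  finally show "(\<integral>t. cmod (d t) \<partial>\<nu>) \<le> 2 * (\<integral>x. cmod (h x) \<partial>M)" by simp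
  fix g :: "'c \<Rightarrow> complex"
  assume g: "g \<in> borel_measurable borel" "\<And>t. cmod (g t) \<le> 1"
  have "(\<integral>t. g t * d t \<partial>\<nu>) = (\<integral>t. of_real (d\<^sub>r t) * g t + \<i> * (of_real (d\<^sub>i t) * g t) \<partial>\<nu>)"
    unfolding d by (simp add: algebra_simps)
  also have "\<dots> = (\<integral>x. of_real (Re (h x)) * g (T x) \<partial>M) + \<i> * (\<integral>x. of_real (Im (h x)) * g (T x) \<partial>M)"
    using R(4)[OF g] I(4)[OF g] by simp
  also have "\<dots> = (\<integral>x. of_real (Re (h x)) * g (T x) + \<i> * (of_real (Im (h x)) * g (T x)) \<partial>M)"
  proof -
    have [measurable]: "h \<in> borel_measurable M" "(\<lambda>x. g (T x)) \<in> borel_measurable M"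
      using hi measurable_compose[OF Tm g(1)] by auto
    have "integrable M (\<lambda>x. g (T x) * of_real (Re (h x)))" "integrable M (\<lambda>x. g (T x) * of_real (Im (h x)))"
      using g(2) int_ri by (auto intro!: integrable_bounded_mult)
    then show ?thesis by (simp add: mult.commute)
  qed
  also have "\<dots> = (\<integral>x. g (T x) * h x \<partial>M)"
    by (rule Bochner_Integration.integral_cong) (auto simp: complex_eq_iff)
  finally show "(\<integral>t. g t * d t \<partial>\<nu>) = (\<integral>x. g (T x) * h x \<partial>M)" .
qed

definition vertex_combination :: "complex ^ 'n \<Rightarrow> real ^ 'n \<Rightarrow> complex" where
  "vertex_combination w t = (\<Sum>j\<in>UNIV. complex_of_real (t $ j) * w $ j)"

lemma vertex_combination_segment:
  "vertex_combination w ((1 - r) *\<^sub>R axis i 1 + r *\<^sub>R t) = (1 - of_real r) * w $ i + of_real r * vertex_combination w t"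
proof -
  have "(\<Sum>j\<in>UNIV. of_real (axis i 1 $ j) * w $ j) = (\<Sum>j\<in>UNIV. if j = i then w $ j else 0)"
    by (rule sum.cong) (auto simp: axis_def)
  then have axis: "(\<Sum>j\<in>UNIV. of_real (axis i 1 $ j) * w $ j) = w $ i"
    by simp
  have "vertex_combination w ((1 - r) *\<^sub>R axis i 1 + r *\<^sub>R t) =
      (\<Sum>j\<in>UNIV. (1 - of_real r) * (of_real (axis i 1 $ j) * w $ j))
      + (\<Sum>j\<in>UNIV. of_real r * (of_real (t $ j) * w $ j))"
    unfolding vertex_combination_def by (simp add: sum.distrib[symmetric] algebra_simps)
  then show ?thesis
    by (simp only: sum_distrib_left[symmetric] axis vertex_combination_def)
qed

lemma vertex_combination_axis: "vertex_combination w (axis i 1) = w $ i"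
  using vertex_combination_segment[of w 0 i "axis i 1"] by simp

lemma borel_measurable_vertex_combination [measurable]: "vertex_combination w \<in> borel_measurable borel"
  unfolding vertex_combination_def by (intro borel_measurable_continuous_onI continuous_intros)

lemma std_simplex_closed: "closed (std_simplex :: (real ^ 'n) set)"
  unfolding std_simplex_def
  by (intro closed_Collect_conj closed_Collect_all closed_Collect_le closed_Collect_eq continuous_intros)

lemma std_simplex_borel [measurable]: "(std_simplex :: (real ^ 'n) set) \<in> sets borel"
  by (rule borel_closed[OF std_simplex_closed])

lemma axis_in_std_simplex: "axis i 1 \<in> std_simplex"
  by (auto simp: std_simplex_def axis_def if_distrib cong: if_cong)

lemma segment_in_std_simplex:
  assumes "t \<in> std_simplex" "r \<in> {0..1}"
  shows "(1 - r) *\<^sub>R axis i 1 + r *\<^sub>R t \<in> std_simplex"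
proof -
  have "(\<Sum>j\<in>UNIV. ((1 - r) *\<^sub>R axis i 1 + r *\<^sub>R t) $ j)
      = (1 - r) * (\<Sum>j\<in>UNIV. axis i 1 $ j) + r * (\<Sum>j\<in>UNIV. t $ j)"
    by (simp add: sum.distrib sum_distrib_left)
  also have "\<dots> = 1" using assms(1) axis_in_std_simplex[of i] by (simp add: std_simplex_def)
  finally show ?thesis
    using assms axis_in_std_simplex[of i] unfolding std_simplex_def by auto
qed

lemma borel_measurable_snd_lebesgue_on [measurable]:
  "(\<lambda>x. snd x) \<in> borel_measurable (N \<Otimes>\<^sub>M lebesgue_on S)"
  using measurable_compose[OF measurable_snd id_borel_measurable_lebesgue_on] by (simp add: id_def)

lemma integrable_pair_fst_mult_bounded:
  fixes \<nu> :: "'a measure" and L :: "'b measure" and a :: "'a \<Rightarrow> complex" and b :: "'a \<times> 'b \<Rightarrow> complex"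
  assumes "finite_measure \<nu>" "finite_measure L"
    and ai: "integrable \<nu> a" and bm: "b \<in> borel_measurable (\<nu> \<Otimes>\<^sub>M L)"
    and bb: "\<And>x. x \<in> space (\<nu> \<Otimes>\<^sub>M L) \<Longrightarrow> cmod (b x) \<le> B"
  shows "integrable (\<nu> \<Otimes>\<^sub>M L) (\<lambda>x. a (fst x) * b x)"
    and "(\<integral>x. cmod (a (fst x) * b x) \<partial>(\<nu> \<Otimes>\<^sub>M L)) \<le> B * measure L (space L) * (\<integral>t. cmod (a t) \<partial>\<nu>)"
proof -
  interpret \<nu>: finite_measure \<nu> by fact
  interpret L: finite_measure L by fact
  interpret pair_sigma_finite \<nu> L ..
  have [measurable]: "a \<in> borel_measurable \<nu>" using ai by auto
  have "integrable (\<nu> \<Otimes>\<^sub>M L) (\<lambda>x. a (fst x))"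
    using ai by (intro Fubini_integrable) auto
  then have i: "integrable (\<nu> \<Otimes>\<^sub>M L) (\<lambda>x. B * cmod (a (fst x)))"
    by auto
  have "cmod (a (fst x) * b x) \<le> B * cmod (a (fst x))" if "x \<in> space (\<nu> \<Otimes>\<^sub>M L)" for x
    using mult_left_mono[OF bb[OF that] norm_ge_zero[of "a (fst x)"]] by (simp add: norm_mult mult.commute)
  note bound = this
  then show int: "integrable (\<nu> \<Otimes>\<^sub>M L) (\<lambda>x. a (fst x) * b x)"
    using bm by (intro Bochner_Integration.integrable_bound[OF i] AE_I2) (auto intro: order_trans[OF _ abs_ge_self])
  have "(\<integral>x. cmod (a (fst x) * b x) \<partial>(\<nu> \<Otimes>\<^sub>M L)) \<le> (\<integral>x. B * cmod (a (fst x)) \<partial>(\<nu> \<Otimes>\<^sub>M L))"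
    using int i bound by (intro integral_mono) auto
  also have "\<dots> = (\<integral>t. (\<integral>s. B * cmod (a (fst (t, s))) \<partial>L) \<partial>\<nu>)"
    by (rule integral_fst'[symmetric]) (rule i)
  also have "\<dots> = B * measure L (space L) * (\<integral>t. cmod (a t) \<partial>\<nu>)"
    by (simp add: mult_ac)
  finally show "(\<integral>x. cmod (a (fst x) * b x) \<partial>(\<nu> \<Otimes>\<^sub>M L)) \<le> B * measure L (space L) * (\<integral>t. cmod (a t) \<partial>\<nu>)" .
qed

definition lift_density ::
    "nat \<Rightarrow> (nat \<Rightarrow> 'a \<Rightarrow> complex) \<Rightarrow> ('a \<Rightarrow> complex) \<Rightarrow> nat \<Rightarrow> 'a \<times> real \<Rightarrow> complex" where
  "lift_density N h \<rho> m' x = (\<Sum>m=1..N. h m (fst x) * two_point_density m m' (\<rho> (fst x)) (snd x))"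

lemma lift_density_integrable:
  fixes \<nu> :: "'a measure"
  assumes fin: "finite_measure \<nu>" and hi: "\<And>m. m \<in> {1..N} \<Longrightarrow> integrable \<nu> (h m)"
    and \<rho>[measurable]: "\<rho> \<in> borel_measurable \<nu>" and \<rho>1: "\<And>t. cmod (\<rho> t) \<le> 1"
  defines "M \<equiv> \<nu> \<Otimes>\<^sub>M lebesgue_on {0..3}"
  shows "integrable M (lift_density N h \<rho> m')"
    and "(\<integral>x. cmod (lift_density N h \<rho> m' x) \<partial>M)
           \<le> 3 * (\<Sum>m=1..N. two_point_density_bound m m' * (\<integral>t. cmod (h m t) \<partial>\<nu>))"
proof -
  have finL: "finite_measure (lebesgue_on {0..3::real})"
    by (rule finite_measure_lebesgue_on) auto
  have measL: "measure (lebesgue_on {0..3::real}) (space (lebesgue_on {0..3})) = 3"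
    by (simp add: measure_restrict_space)
  have bm: "(\<lambda>x. two_point_density m m' (\<rho> (fst x)) (snd x)) \<in> borel_measurable M" for m
    unfolding M_def by measurable
  have bb: "cmod (two_point_density m m' (\<rho> (fst x)) (snd x)) \<le> two_point_density_bound m m'"
    if "x \<in> space M" for m x
    using that norm_two_point_density_le[OF \<rho>1] by (auto simp: M_def space_pair_measure)
  note summand = integrable_pair_fst_mult_bounded[OF fin finL hi bm[unfolded M_def] bb[unfolded M_def],
      folded M_def, unfolded measL]
  show int: "integrable M (lift_density N h \<rho> m')"
    unfolding lift_density_def[abs_def] using summand(1) by auto
  have "(\<integral>x. cmod (lift_density N h \<rho> m' x) \<partial>M)
      \<le> (\<integral>x. (\<Sum>m=1..N. cmod (h m (fst x) * two_point_density m m' (\<rho> (fst x)) (snd x))) \<partial>M)"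
    using int summand(1) unfolding lift_density_def by (intro integral_mono norm_sum) auto
  also have "\<dots> = (\<Sum>m=1..N. \<integral>x. cmod (h m (fst x) * two_point_density m m' (\<rho> (fst x)) (snd x)) \<partial>M)"
    using summand(1) by (intro Bochner_Integration.integral_sum) auto
  also have "\<dots> \<le> (\<Sum>m=1..N. two_point_density_bound m m' * 3 * (\<integral>t. cmod (h m t) \<partial>\<nu>))"
    using summand(2) by (intro sum_mono) (auto simp: mult_ac)
  finally show "(\<integral>x. cmod (lift_density N h \<rho> m' x) \<partial>M)
      \<le> 3 * (\<Sum>m=1..N. two_point_density_bound m m' * (\<integral>t. cmod (h m t) \<partial>\<nu>))"
    by (simp add: sum_distrib_left mult_ac)
qed

text \<open>Integrating out the segment parameter \<open>s\<close> with the two-point formula multiplies each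
  \<open>phase (z - P t)^m\<close> by \<open>phase (z - W)\<close>.\<close>

lemma lift_density_identity:
  fixes \<nu> :: "'a measure" and P :: "'a \<Rightarrow> complex"
  assumes fin: "finite_measure \<nu>" and hi: "\<And>m. m \<in> {1..N} \<Longrightarrow> integrable \<nu> (h m)"
    and P[measurable]: "P \<in> borel_measurable \<nu>" and zW: "z \<noteq> W"
  defines "\<rho> \<equiv> \<lambda>t. phase (W - P t)"
    and "Q \<equiv> \<lambda>x. phase (z - ((1 - of_real (segment_param (snd x))) * W
                               + of_real (segment_param (snd x)) * P (fst x)))"
  shows "(\<Sum>m'=1..N+1. \<integral>x. Q x ^ m' * lift_density N h \<rho> m' x \<partial>(\<nu> \<Otimes>\<^sub>M lebesgue_on {0..3}))
       = phase (z - W) * (\<Sum>m=1..N. \<integral>t. phase (z - P t) ^ m * h m t \<partial>\<nu>)"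
proof -
  define L where "L = lebesgue_on {0..3::real}"
  interpret \<nu>: finite_measure \<nu> by fact
  interpret L: finite_measure L
    unfolding L_def by (rule finite_measure_lebesgue_on) auto
  interpret pair_sigma_finite \<nu> L ..
  have [measurable]: "\<rho> \<in> borel_measurable \<nu>"
    unfolding \<rho>_def by measurable
  have int: "integrable (\<nu> \<Otimes>\<^sub>M L) (\<lambda>x. Q x ^ m' * lift_density N h \<rho> m' x)" for m'
    using lift_density_integrable(1)[OF fin hi, where \<rho> = \<rho> and m' = m'] norm_phase_power_le
    unfolding L_def Q_def \<rho>_def by (intro integrable_bounded_mult) (auto simp: norm_phase_le)
  have inner: "(\<integral>s. (\<Sum>m'=1..N+1. Q (t, s) ^ m' * lift_density N h \<rho> m' (t, s)) \<partial>L)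
      = (\<Sum>m=1..N. phase (z - W) * (phase (z - P t) ^ m * h m t))" for t
  proof -
    define F where "F = (\<lambda>m s. \<Sum>m'=1..N+1. Q (t, s) ^ m' * two_point_density m m' (\<rho> t) s)"
    have F: "integrable L (F m)" "(\<integral>s. F m s \<partial>L) = phase (z - P t) ^ m * phase (z - W)"
      if "m \<in> {1..N}" for m
      using two_point_integral[of m "N + 1" z W "P t"] that zW
      unfolding F_def L_def Q_def \<rho>_def by auto
    have "(\<integral>s. (\<Sum>m'=1..N+1. Q (t, s) ^ m' * lift_density N h \<rho> m' (t, s)) \<partial>L)
        = (\<integral>s. (\<Sum>m=1..N. h m t * F m s) \<partial>L)"
      unfolding lift_density_def F_def sum_distrib_left
      by (subst sum.swap) (auto intro!: sum.cong simp: mult_ac)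
    also have "\<dots> = (\<Sum>m=1..N. h m t * (\<integral>s. F m s \<partial>L))"
      using F by (subst Bochner_Integration.integral_sum) auto
    also have "\<dots> = (\<Sum>m=1..N. h m t * (phase (z - P t) ^ m * phase (z - W)))"
      using F(2) by (intro sum.cong) auto
    finally show ?thesis
      by (simp only: mult_ac)
  qed
  have "(\<Sum>m'=1..N+1. \<integral>x. Q x ^ m' * lift_density N h \<rho> m' x \<partial>(\<nu> \<Otimes>\<^sub>M L))
      = (\<integral>x. (\<Sum>m'=1..N+1. Q x ^ m' * lift_density N h \<rho> m' x) \<partial>(\<nu> \<Otimes>\<^sub>M L))"
    using int by (intro Bochner_Integration.integral_sum[symmetric]) auto
  also have "\<dots> = (\<integral>t. (\<integral>s. (\<Sum>m'=1..N+1. Q (t, s) ^ m' * lift_density N h \<rho> m' (t, s)) \<partial>L) \<partial>\<nu>)"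
    by (intro integral_fst'[symmetric] Bochner_Integration.integrable_sum int)
  also have "\<dots> = (\<integral>t. (\<Sum>m=1..N. phase (z - W) * (phase (z - P t) ^ m * h m t)) \<partial>\<nu>)"
    by (simp only: inner)
  also have "\<dots> = phase (z - W) * (\<Sum>m=1..N. \<integral>t. phase (z - P t) ^ m * h m t \<partial>\<nu>)"
  proof -
    have "integrable \<nu> (\<lambda>t. phase (z - P t) ^ m * h m t)" if "m \<in> {1..N}" for m
      using hi[OF that] norm_phase_power_le by (intro integrable_bounded_mult) auto
    then show ?thesis
      by (simp add: Bochner_Integration.integral_sum sum_distrib_left)
  qed
  finally show ?thesis
    unfolding L_def .
qed

definition segment_map :: "'n \<Rightarrow> (real ^ 'n) \<times> real \<Rightarrow> real ^ 'n" where
  "segment_map i x = (1 - segment_param (snd x)) *\<^sub>R axis i 1 + segment_param (snd x) *\<^sub>R fst x"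

lemma vertex_combination_segment_map:
  "vertex_combination w (segment_map i x) = (1 - of_real (segment_param (snd x))) * w $ i
     + of_real (segment_param (snd x)) * vertex_combination w (fst x)"
  by (simp add: segment_map_def vertex_combination_segment)

lemma measurable_segment_map:
  assumes "sets \<nu> = sets borel"
  shows "segment_map i \<in> \<nu> \<Otimes>\<^sub>M lebesgue_on {0..3} \<rightarrow>\<^sub>M borel"
proof -
  have "sets (\<nu> \<Otimes>\<^sub>M lebesgue_on {0..3}) = sets (borel \<Otimes>\<^sub>M lebesgue_on {0..3::real})"
    using assms by (rule sets_pair_measure_cong) simp
  moreover have "segment_map i \<in> borel \<Otimes>\<^sub>M lebesgue_on {0..3} \<rightarrow>\<^sub>M borel"
    unfolding segment_map_def by measurable
  ultimately show ?thesis
    by (simp cong: measurable_cong_sets)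
qed

lemma segment_map_image_null_outside_simplex:
  assumes \<nu>: "sets \<nu> = sets borel" "emeasure \<nu> (UNIV - std_simplex) = 0"
  shows "emeasure (distr (\<nu> \<Otimes>\<^sub>M lebesgue_on {0..3}) borel (segment_map i)) (UNIV - std_simplex) = 0"
proof -
  define L where "L = lebesgue_on {0..3::real}"
  define M where "M = \<nu> \<Otimes>\<^sub>M L"
  interpret L: finite_measure L
    unfolding L_def by (rule finite_measure_lebesgue_on) auto
  have T: "segment_map i \<in> M \<rightarrow>\<^sub>M borel"
    unfolding M_def L_def by (rule measurable_segment_map[OF \<nu>(1)])
  have space: "space M = UNIV \<times> {0..3}"
    using sets_eq_imp_space_eq[OF \<nu>(1)] by (simp add: M_def L_def space_pair_measure)
  have out: "UNIV - std_simplex \<in> sets \<nu>" "{0..3} \<in> sets L"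
    using \<nu>(1) sets.top[of L] by (auto simp: L_def)
  then have "emeasure M ((UNIV - std_simplex) \<times> {0..3}) = 0"
    unfolding M_def by (simp add: L.emeasure_pair_measure_Times \<nu>(2))
  then have "(UNIV - std_simplex) \<times> {0..3} \<in> null_sets M"
    using out by (simp add: M_def null_sets_def)
  moreover have "segment_map i (t, s) \<in> std_simplex" if "t \<in> std_simplex" "s \<in> {0..3}" for t s
    unfolding segment_map_def using that by (auto intro!: segment_in_std_simplex segment_param_range)
  then have "segment_map i -` (UNIV - std_simplex) \<inter> space M \<subseteq> (UNIV - std_simplex) \<times> {0..3}"
    unfolding space by auto
  moreover have "segment_map i -` (UNIV - std_simplex) \<inter> space M \<in> sets M"
    using T by measurable
  ultimately have "segment_map i -` (UNIV - std_simplex) \<inter> space M \<in> null_sets M"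
    by (metis null_sets_subset)
  then show ?thesis
    unfolding M_def[symmetric] L_def[symmetric] using T by (simp add: emeasure_distr null_sets_def)
qed

text \<open>The induction invariant: the identity of the theorem for the partial product over \<open>S\<close>,
  with one positive measure \<open>\<nu>\<close> on the simplex shared by all densities \<open>h m\<close>.\<close>

definition phase_repr ::
    "'n::finite set \<Rightarrow> complex ^ 'n \<Rightarrow> real \<Rightarrow> (real ^ 'n) measure \<Rightarrow> (nat \<Rightarrow> real ^ 'n \<Rightarrow> complex) \<Rightarrow> bool"
  where "phase_repr S w C \<nu> h \<longleftrightarrow>
    finite_measure \<nu> \<and> sets \<nu> = sets borel \<and> emeasure \<nu> (UNIV - std_simplex) = 0 \<and>
    (\<forall>m\<in>{1..card S}. h m \<in> borel_measurable borel \<and> integrable \<nu> (h m) \<and> (\<integral>t. cmod (h m t) \<partial>\<nu>) \<le> C) \<and>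
    (\<forall>z. (\<forall>j\<in>S. z \<noteq> w $ j) \<longrightarrow>
       (\<Prod>j\<in>S. phase (z - w $ j)) = (\<Sum>m=1..card S. \<integral>t. phase (z - vertex_combination w t) ^ m * h m t \<partial>\<nu>))"

lemma phase_repr_singleton:
  fixes i :: "'n::finite"
  shows "phase_repr {i} w 1 (distr (count_space {()}) borel (\<lambda>_. axis i 1)) (\<lambda>_ _. 1)"
proof -
  define \<nu> where "\<nu> = distr (count_space {()}) borel (\<lambda>_. axis i (1::real))"
  have c: "(\<lambda>_. axis i (1::real)) \<in> count_space {()} \<rightarrow>\<^sub>M borel" by simp
  have fin: "finite_measure \<nu>"
    unfolding \<nu>_def by (rule finite_measure.finite_measure_distr[OF finite_measure_count_space c]) simp
  have sets: "sets \<nu> = sets borel"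
    by (simp add: \<nu>_def)
  have supp: "emeasure \<nu> (UNIV - std_simplex) = 0"
    unfolding \<nu>_def using axis_in_std_simplex[of i] by (simp add: emeasure_distr)
  have integral: "(\<integral>t. f t \<partial>\<nu>) = f (axis i 1)" if "f \<in> borel_measurable borel"
    for f :: "real ^ 'n \<Rightarrow> 'b::{banach,second_countable_topology}"
    unfolding \<nu>_def by (subst integral_distr[OF c that]) (simp add: lebesgue_integral_count_space_finite)
  have "(\<lambda>t. phase (z - vertex_combination w t)) \<in> borel_measurable borel" for z
    by measurable
  from integral[OF this] have phase_integral:
    "(\<integral>t. phase (z - vertex_combination w t) \<partial>\<nu>) = phase (z - w $ i)" for z
    by (simp add: vertex_combination_axis)
  have "(\<integral>t. cmod (1::complex) \<partial>\<nu>) = 1"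
    using integral[of "\<lambda>_. 1::real"] by simp
  moreover have "integrable \<nu> (\<lambda>_. 1::complex)"
    using fin by (simp add: finite_measure.integrable_const)
  ultimately have densities: "\<forall>m\<in>{1..card {i}}. (\<lambda>_. 1::complex) \<in> borel_measurable borel
      \<and> integrable \<nu> (\<lambda>_. 1::complex) \<and> (\<integral>t. cmod (1::complex) \<partial>\<nu>) \<le> 1"
    by (intro ballI conjI borel_measurable_const order_eq_refl)
  have identity: "\<forall>z. (\<forall>j\<in>{i}. z \<noteq> w $ j) \<longrightarrow> (\<Prod>j\<in>{i}. phase (z - w $ j)) =
      (\<Sum>m=1..card {i}. \<integral>t. phase (z - vertex_combination w t) ^ m * 1 \<partial>\<nu>)"
    by (simp add: phase_integral)
  show ?thesis
    unfolding phase_repr_def \<nu>_def[symmetric] by (intro conjI fin sets supp densities identity)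
qed

definition insert_bound :: "nat \<Rightarrow> real" where
  "insert_bound N = 6 * (\<Sum>m'=1..N+1. \<Sum>m=1..N. two_point_density_bound m m')"

lemma lift_pushforward_norm_integral_le:
  fixes \<nu> :: "'a measure" and T :: "'a \<times> real \<Rightarrow> 'c::second_countable_topology"
  assumes fin: "finite_measure \<nu>" and hi: "\<And>m. m \<in> {1..N} \<Longrightarrow> integrable \<nu> (h m)"
    and hC: "\<And>m. m \<in> {1..N} \<Longrightarrow> (\<integral>t. cmod (h m t) \<partial>\<nu>) \<le> C" and "0 \<le> C"
    and \<rho>: "\<rho> \<in> borel_measurable \<nu>" "\<And>t. cmod (\<rho> t) \<le> 1"
    and T: "T \<in> \<nu> \<Otimes>\<^sub>M lebesgue_on {0..3} \<rightarrow>\<^sub>M borel" and m': "m' \<in> {1..N+1}"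
  defines "M \<equiv> \<nu> \<Otimes>\<^sub>M lebesgue_on {0..3}"
  shows "(\<integral>t. cmod (complex_pushforward_density M T (lift_density N h \<rho> m') t) \<partial>distr M borel T)
           \<le> insert_bound N * C"
proof -
  have finM: "finite_measure M"
    unfolding M_def by (intro finite_measure_pair_measure fin finite_measure_lebesgue_on) auto
  note H = lift_density_integrable[where h = h and N = N, OF fin hi \<rho>, folded M_def]
  have "(\<integral>t. cmod (complex_pushforward_density M T (lift_density N h \<rho> m') t) \<partial>distr M borel T)
      \<le> 2 * (\<integral>x. cmod (lift_density N h \<rho> m' x) \<partial>M)"
    using complex_pushforward_density(3)[OF finM T[folded M_def] H(1)] .
  also have "\<dots> \<le> 6 * (\<Sum>m=1..N. two_point_density_bound m m' * (\<integral>t. cmod (h m t) \<partial>\<nu>))"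
    using H(2)[of m'] by simp
  also have "\<dots> \<le> 6 * (\<Sum>m=1..N. two_point_density_bound m m' * C)"
    by (intro mult_left_mono sum_mono two_point_density_bound_nonneg hC) auto
  also have "\<dots> = 6 * C * (\<Sum>m=1..N. two_point_density_bound m m')"
    by (simp add: sum_distrib_left mult_ac)
  also have "\<dots> \<le> 6 * C * (\<Sum>m''=1..N+1. \<Sum>m=1..N. two_point_density_bound m m'')"
    using m' \<open>0 \<le> C\<close>
    by (intro mult_left_mono member_le_sum sum_nonneg two_point_density_bound_nonneg) auto
  finally show ?thesis
    by (simp add: insert_bound_def mult_ac)
qed

lemma pushforward_lift_density_identity:
  fixes \<nu> :: "(real ^ 'n) measure" and i :: 'n
  assumes fin: "finite_measure \<nu>" and s\<nu>: "sets \<nu> = sets borel"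
    and hi: "\<And>m. m \<in> {1..N} \<Longrightarrow> integrable \<nu> (h m)" and zi: "z \<noteq> w $ i"
  defines "M \<equiv> \<nu> \<Otimes>\<^sub>M lebesgue_on {0..3}"
    and "H \<equiv> lift_density N h (\<lambda>t. phase (w $ i - vertex_combination w t))"
  shows "(\<Sum>m'=1..N+1. \<integral>t. phase (z - vertex_combination w t) ^ m'
            * complex_pushforward_density M (segment_map i) (H m') t \<partial>distr M borel (segment_map i))
    = phase (z - w $ i) * (\<Sum>m=1..N. \<integral>t. phase (z - vertex_combination w t) ^ m * h m t \<partial>\<nu>)"
proof -
  have finM: "finite_measure M"
    unfolding M_def by (intro finite_measure_pair_measure fin finite_measure_lebesgue_on) auto
  have T: "segment_map i \<in> M \<rightarrow>\<^sub>M borel"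
    unfolding M_def by (rule measurable_segment_map[OF s\<nu>])
  have "(\<lambda>t. phase (w $ i - vertex_combination w t)) \<in> borel_measurable borel"
    "vertex_combination w \<in> borel_measurable borel"
    by measurable
  then have \<rho>: "(\<lambda>t. phase (w $ i - vertex_combination w t)) \<in> borel_measurable \<nu>"
    and P: "vertex_combination w \<in> borel_measurable \<nu>"
    using s\<nu> by (simp_all cong: measurable_cong_sets)
  have H_int: "integrable M (H m')" for m'
    unfolding H_def M_def by (rule lift_density_integrable(1)) (use fin hi \<rho> norm_phase_le in auto)
  have g: "(\<lambda>t. phase (z - vertex_combination w t) ^ m') \<in> borel_measurable borel" for m'
    by measurable
  have "(\<Sum>m'=1..N+1. \<integral>t. phase (z - vertex_combination w t) ^ m'
          * complex_pushforward_density M (segment_map i) (H m') t \<partial>distr M borel (segment_map i))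
      = (\<Sum>m'=1..N+1. \<integral>x. phase (z - vertex_combination w (segment_map i x)) ^ m' * H m' x \<partial>M)"
    using complex_pushforward_density(4)[OF finM T H_int g norm_phase_power_le] by simp
  also have "\<dots> = phase (z - w $ i) * (\<Sum>m=1..N. \<integral>t. phase (z - vertex_combination w t) ^ m * h m t \<partial>\<nu>)"
    unfolding vertex_combination_segment_map H_def M_def
    by (rule lift_density_identity[where h = h and N = N]) (use fin hi P zi in auto)
  finally show ?thesis .
qed

lemma phase_repr_insert:
  assumes i: "i \<notin> S" and S: "S \<noteq> {}" and rep: "phase_repr S w C \<nu> h"
  defines "M \<equiv> \<nu> \<Otimes>\<^sub>M lebesgue_on {0..3}"
    and "H \<equiv> lift_density (card S) h (\<lambda>t. phase (w $ i - vertex_combination w t))"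
  shows "phase_repr (insert i S) w (insert_bound (card S) * C) (distr M borel (segment_map i))
    (\<lambda>m. complex_pushforward_density M (segment_map i) (H m))"
proof -
  define N where "N = card S"
  have N: "1 \<le> N" "card (insert i S) = N + 1"
    using i S by (auto simp: N_def Suc_le_eq card_gt_0_iff)
  have fin: "finite_measure \<nu>" and s\<nu>: "sets \<nu> = sets borel"
    and supp: "emeasure \<nu> (UNIV - std_simplex) = 0"
    and hi: "\<And>m. m \<in> {1..N} \<Longrightarrow> integrable \<nu> (h m)"
    and hC: "\<And>m. m \<in> {1..N} \<Longrightarrow> (\<integral>t. cmod (h m t) \<partial>\<nu>) \<le> C"
    and ident: "\<And>z. \<forall>j\<in>S. z \<noteq> w $ j \<Longrightarrow>
      (\<Prod>j\<in>S. phase (z - w $ j)) = (\<Sum>m=1..N. \<integral>t. phase (z - vertex_combination w t) ^ m * h m t \<partial>\<nu>)"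
    using rep unfolding phase_repr_def N_def by auto
  have "0 \<le> (\<integral>t. cmod (h 1 t) \<partial>\<nu>)"
    by (intro integral_nonneg_AE) simp
  moreover have "(\<integral>t. cmod (h 1 t) \<partial>\<nu>) \<le> C"
    using hC N(1) by simp
  ultimately have "0 \<le> C"
    by linarith
  have finM: "finite_measure M"
    unfolding M_def by (intro finite_measure_pair_measure fin finite_measure_lebesgue_on) auto
  have T: "segment_map i \<in> M \<rightarrow>\<^sub>M borel"
    unfolding M_def by (rule measurable_segment_map[OF s\<nu>])
  have "(\<lambda>t. phase (w $ i - vertex_combination w t)) \<in> borel_measurable borel"
    by measurable
  then have \<rho>: "(\<lambda>t. phase (w $ i - vertex_combination w t)) \<in> borel_measurable \<nu>"
    using s\<nu> by (simp cong: measurable_cong_sets)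
  have H_int: "integrable M (H m')" for m'
    unfolding H_def M_def N_def[symmetric]
    by (rule lift_density_integrable(1)) (use fin hi \<rho> norm_phase_le in auto)
  note D = complex_pushforward_density[OF finM T H_int]
  show ?thesis
    unfolding phase_repr_def N(2) N_def[symmetric]
  proof (intro conjI ballI allI impI)
    show "finite_measure (distr M borel (segment_map i))"
      by (rule finite_measure.finite_measure_distr[OF finM T])
    show "sets (distr M borel (segment_map i)) = sets borel"
      by simp
    show "emeasure (distr M borel (segment_map i)) (UNIV - std_simplex) = 0"
      unfolding M_def by (rule segment_map_image_null_outside_simplex[OF s\<nu> supp])
    fix m' assume m': "m' \<in> {1..N + 1}"
    show "complex_pushforward_density M (segment_map i) (H m') \<in> borel_measurable borel"
      "integrable (distr M borel (segment_map i)) (complex_pushforward_density M (segment_map i) (H m'))"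
      using D(1,2) by auto
    show "(\<integral>t. cmod (complex_pushforward_density M (segment_map i) (H m') t) \<partial>distr M borel (segment_map i))
        \<le> insert_bound N * C"
      unfolding H_def M_def N_def[symmetric]
      by (rule lift_pushforward_norm_integral_le[OF fin hi hC \<open>0 \<le> C\<close> \<rho> norm_phase_le
            T[unfolded M_def] m'])
  next
    fix z assume z: "\<forall>j\<in>insert i S. z \<noteq> w $ j"
    then have zi: "z \<noteq> w $ i" and zS: "\<forall>j\<in>S. z \<noteq> w $ j"
      by auto
    have "(\<Sum>m'=1..N+1. \<integral>t. phase (z - vertex_combination w t) ^ m'
          * complex_pushforward_density M (segment_map i) (H m') t \<partial>distr M borel (segment_map i))
        = phase (z - w $ i) * (\<Sum>m=1..N. \<integral>t. phase (z - vertex_combination w t) ^ m * h m t \<partial>\<nu>)"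
      unfolding M_def H_def N_def
      by (rule pushforward_lift_density_identity) (use fin s\<nu> hi zi in \<open>auto simp: N_def\<close>)
    then show "(\<Prod>j\<in>insert i S. phase (z - w $ j)) = (\<Sum>m'=1..N+1. \<integral>t. phase (z - vertex_combination w t) ^ m'
          * complex_pushforward_density M (segment_map i) (H m') t \<partial>distr M borel (segment_map i))"
      using ident[OF zS] i by simp
  qed
qed

lemma phase_repr_exists:
  fixes S :: "'n::finite set"
  assumes "S \<noteq> {}"
  shows "\<exists>C. \<forall>w. \<exists>\<nu> h. phase_repr S w C \<nu> h"
proof -
  have "finite S" by simp
  then show ?thesis using assms
  proof (induction S rule: finite_ne_induct)
    case (singleton i)
    then show ?case using phase_repr_singleton by blast
  next
    case (insert i S)
    then show ?case using phase_repr_insert[OF insert.hyps(3) insert.hyps(2)] by blast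
  qed
qed

theorem theorem3p7:
  shows "\<exists>C::real. C > 0 \<and>
    (\<forall>w :: complex ^ 'n. \<exists>\<mu> :: nat \<Rightarrow> 'n cmeasure.
       (\<forall>k\<in>{1..CARD('n)}. is_cmeasure_on std_simplex (\<mu> k) \<and> cm_total_var (\<mu> k) \<le> C) \<and>
       (\<forall>z::complex. (\<forall>j. z \<noteq> w $ j) \<longrightarrow>
          phase (\<Prod>j\<in>UNIV. z - w $ j) =
          (\<Sum>k=1..CARD('n). cm_integral (\<mu> k)
              (\<lambda>t. phase (z - (\<Sum>j\<in>UNIV. complex_of_real (t $ j) * w $ j)) ^ k))))"
proof -
  obtain C where C: "\<And>w. \<exists>\<nu> h. phase_repr (UNIV :: 'n set) w C \<nu> h"
    using phase_repr_exists[of "UNIV :: 'n set"] by auto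
  show ?thesis
  proof (intro exI[of _ "max C 1"] conjI allI)
    fix w :: "complex ^ 'n"
    obtain \<nu> h where rep: "phase_repr UNIV w C \<nu> h"
      using C by blast
    show "\<exists>\<mu> :: nat \<Rightarrow> 'n cmeasure.
       (\<forall>k\<in>{1..CARD('n)}. is_cmeasure_on std_simplex (\<mu> k) \<and> cm_total_var (\<mu> k) \<le> max C 1) \<and>
       (\<forall>z. (\<forall>j. z \<noteq> w $ j) \<longrightarrow> phase (\<Prod>j\<in>UNIV. z - w $ j) = (\<Sum>k=1..CARD('n). cm_integral (\<mu> k)
              (\<lambda>t. phase (z - (\<Sum>j\<in>UNIV. complex_of_real (t $ j) * w $ j)) ^ k)))"
      using rep
      by (intro exI[of _ "\<lambda>k. (\<nu>, h k)"])
        (auto simp: phase_repr_def is_cmeasure_on_def cm_total_var_def cm_integral_def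
          vertex_combination_def phase_prod max.coboundedI1)
  qed simp
qed

end
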